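(* Let $(G,\mathbf p)$ be a framework (with $\mathbf p$ pinned with $\ell$-dimensional affine span) and $E$ an energy that is stiff-bar at $\mathbf p$, and define $f(\delta\mathbf p)=E(\mathbf p+\delta\mathbf p)-E(\mathbf p)$ on $\ell$-pinned configuration space. Consider the family of trajectories $$\delta\mathbf p(t;\mathbf p_0',\mathbf p_0'')=\mathbf p_0't+\mathbf p_0''t^2,\qquad \mathbf p_0'\in K,\ \mathbf p_0''\in\overline K,\ |\mathbf p_0'+\mathbf p_0''|=1.$$ If $(G,\mathbf p)$ has a $(1,2)$ $E$-flex, then this family is indicative at order $4$ for $f$ at the origin.
   Context: Fix a dimension $d$. A configuration is $\mathbf p=(\mathbf p_1,\dots,\mathbf p_n)$, $\mathbf p_i\in\mathbb R^d$; a framework $(G,\mathbf p)$ consists of a graph $G$ on $\{1,\dots,n\}$ and a configuration. A configuration $\mathbf q$ is in $\ell$-pinned position if $\mathbf q_1=0$ and, for $2\le i\le\ell+1$, $\mathbf q_i\in\mathrm{span}(e_1,\dots,e_{i-1})$; these form the $\ell$-pinned configuration space. $\mathbf p$ is pinned if it has $\ell$-dimensional affine span, $\mathbf p_1,\dots,\mathbf p_{\ell+1}$ are affinely independent, and $\mathbf p$ is in $\ell$-pinned position. $K$ is the linear space of $\ell$-pinned $\mathbf p'$ with $(\mathbf p_v-\mathbf p_w)\cdot(\mathbf p'_v-\mathbf p'_w)=0$ for all edges $vw$, and $\overline K$ is a fixed complementary subspace of $K$ in $\ell$-pinned configuration space. A stiff-bar energy at $\mathbf p$ is $E(\mathbf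 q)=\sum_{ij\in E(G)}E_{ij}(|\mathbf q_i-\mathbf q_j|)$ on $\ell$-pinned configurations, each $E_{ij}$ analytic at $d_{ij}=|\mathbf p_i-\mathbf p_j|\ne0$ with a strict local minimum there and $E_{ij}''(d_{ij})>0$. A $C^k$ function $\varphi(t)$ is $k$-vanishing if $\varphi^{(i)}(0)=0$ for $1\le i\le k$, $k$-active if $(k-1)$-vanishing but not $k$-vanishing. A $(j,k)$ $E$-flex is an analytic non-constant $\ell$-pinned trajectory $\mathbf p(t)$, $\mathbf p(0)=\mathbf p$, that is $j$-active and with $E(\mathbf p(t))$ $k$-vanishing. A family of test trajectories $\{\mathbf z(t;\mathbf z_0)\}_{\mathbf z_0\in S}$ consists of maps defined for $t$ in a common interval $[0,\varepsilon]$, each $t\mapsto\mathbf z(t;\mathbf z_0)$ analytic, non-constant, with $\mathbf z(0;\mathbf z_0)=0$. For a $C^{2k+1}$ function $f$ with a critical point at $0$ and $f(0)=0$, it is indicative at order $2k$ for $f$ if: (I1) $S$ is compact; (I2) $(t,\mathbf z_0)\mapsto\mathbf z(t;\mathbf z_0)$ is $C^{2k+1}$; (I3) for every $0<\delta\le\varepsilon$ there is a neighborhood $U$ of the origin such that every point of $U$ equals $\mathbf z(t;\mathbf z_0)$ for some $\mathbf z_0\in S$, $t\in[0,\delta]$; (I4) for every $\mathbf z_0\in S$ all Taylor coefficients in $t$ of $f(\mathbf z(t;\mathbf z_0))$ of order less than $2k$ vanish. *)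

theory Defs
  imports "HOL-Analysis.Analysis"
begin

text \<open>Vertices are the
elements of the finite linearly ordered type 'n (vertex i is the element of rank i-1);
coordinates are the elements of the finite linearly ordered type 'd (e_c is the
coordinate of rank c-1).\<close>

definition rank :: "'a::{finite,linorder} \<Rightarrow> nat" where
  "rank v = card {w. w < v}"

text \<open>Edges: each edge {i,j} of G is represented exactly once as the pair (i,j) with i<j.\<close>
definition graph_edges :: "('n::{finite,linorder} \<times> 'n::{finite,linorder}) set \<Rightarrow> bool" where
  "graph_edges Eg \<longleftrightarrow> (\<forall>(i,j)\<in>Eg. i < j)"

text \<open>l-pinned position: q_1 = 0 and q_i in span(e_1..e_{i-1}) for 2 <= i <= l+1.\<close>
definition pinned_pos :: "nat \<Rightarrow> real^'d::{finite,linorder}^'n::{finite,linorder} \<Rightarrow> bool" where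
  "pinned_pos l q \<longleftrightarrow>
     (\<forall>v c. rank v \<le> l \<longrightarrow> rank c \<ge> rank v \<longrightarrow> q $ v $ c = 0)"

definition pinned_space :: "nat \<Rightarrow> (real^'d::{finite,linorder}^'n::{finite,linorder}) set" where
  "pinned_space l = {q. pinned_pos l q}"

definition pinned :: "nat \<Rightarrow> real^'d::{finite,linorder}^'n::{finite,linorder} \<Rightarrow> bool" where
  "pinned l p \<longleftrightarrow>
     aff_dim (range (\<lambda>v. p $ v)) = int l \<and>
     l < CARD('n::{finite,linorder}) \<and>
     inj_on (\<lambda>v. p $ v) {v. rank v \<le> l} \<and>
     \<not> affine_dependent ((\<lambda>v. p $ v) ` {v. rank v \<le> l}) \<and>
     pinned_pos l p"

definition Kspace :: "nat \<Rightarrow> ('n::{finite,linorder} \<times> 'n::{finite,linorder}) set \<Rightarrow> real^'d::{finite,linorder}^'n::{finite,linorder}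
    \<Rightarrow> (real^'d::{finite,linorder}^'n::{finite,linorder}) set" where
  "Kspace l Eg p = {q \<in> pinned_space l. \<forall>(v,w)\<in>Eg. (p $ v - p $ w) \<bullet> (q $ v - q $ w) = 0}"

definition complement_in :: "'a::real_vector set \<Rightarrow> 'a set \<Rightarrow> 'a set \<Rightarrow> bool" where
  "complement_in V K Kbar \<longleftrightarrow> subspace Kbar \<and> Kbar \<subseteq> V \<and> K \<inter> Kbar = {0} \<and>
     V \<subseteq> {a + b | a b. a \<in> K \<and> b \<in> Kbar}"

definition real_analytic_at :: "(real \<Rightarrow> 'a::real_normed_vector) \<Rightarrow> real \<Rightarrow> bool" where
  "real_analytic_at f x0 \<longleftrightarrow>
     (\<exists>r>0. \<exists>a::nat \<Rightarrow> 'a. \<forall>x. \<bar>x - x0\<bar> < r \<longrightarrow> (\<lambda>m. (x - x0) ^ m *\<^sub>R a m) sums f x)"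

definition energy :: "('n::{finite,linorder} \<times> 'n::{finite,linorder}) set \<Rightarrow> ('n::{finite,linorder} \<times> 'n::{finite,linorder} \<Rightarrow> real \<Rightarrow> real)
    \<Rightarrow> real^'d::{finite,linorder}^'n::{finite,linorder} \<Rightarrow> real" where
  "energy Eg Ee q = (\<Sum>(i,j)\<in>Eg. Ee (i,j) (norm (q $ i - q $ j)))"

definition stiff_bar :: "('n::{finite,linorder} \<times> 'n::{finite,linorder}) set \<Rightarrow> ('n::{finite,linorder} \<times> 'n::{finite,linorder} \<Rightarrow> real \<Rightarrow> real)
    \<Rightarrow> real^'d::{finite,linorder}^'n::{finite,linorder} \<Rightarrow> bool" where
  "stiff_bar Eg Ee p \<longleftrightarrow> (\<forall>(i,j)\<in>Eg.
     norm (p $ i - p $ j) \<noteq> 0 \<and>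
     real_analytic_at (Ee (i,j)) (norm (p $ i - p $ j)) \<and>
     (\<exists>r>0. \<forall>x. 0 < \<bar>x - norm (p $ i - p $ j)\<bar> \<and> \<bar>x - norm (p $ i - p $ j)\<bar> < r
          \<longrightarrow> Ee (i,j) (norm (p $ i - p $ j)) < Ee (i,j) x) \<and>
     deriv (deriv (Ee (i,j))) (norm (p $ i - p $ j)) > 0)"

primrec hvd :: "nat \<Rightarrow> (real \<Rightarrow> 'a::real_normed_vector) \<Rightarrow> real set \<Rightarrow> real \<Rightarrow> 'a" where
  "hvd 0 f S = f"
| "hvd (Suc m) f S = (\<lambda>t. vector_derivative (hvd m f S) (at t within S))"

definition vanishing :: "nat \<Rightarrow> (real \<Rightarrow> 'a::real_normed_vector) \<Rightarrow> bool" where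
  "vanishing k \<phi> \<longleftrightarrow> (\<forall>i\<in>{1..k}. hvd i \<phi> UNIV 0 = 0)"

definition active :: "nat \<Rightarrow> (real \<Rightarrow> 'a::real_normed_vector) \<Rightarrow> bool" where
  "active k \<phi> \<longleftrightarrow> vanishing (k - 1) \<phi> \<and> \<not> vanishing k \<phi>"

definition E_flex :: "nat \<Rightarrow> nat \<Rightarrow> nat \<Rightarrow> ('n::{finite,linorder} \<times> 'n::{finite,linorder}) set
    \<Rightarrow> ('n::{finite,linorder} \<times> 'n::{finite,linorder} \<Rightarrow> real \<Rightarrow> real) \<Rightarrow> real^'d::{finite,linorder}^'n::{finite,linorder} \<Rightarrow> bool" where
  "E_flex j k l Eg Ee p \<longleftrightarrow> (\<exists>(P :: real \<Rightarrow> real^'d::{finite,linorder}^'n::{finite,linorder}) r. r > 0 \<and>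
     (\<forall>t. \<bar>t\<bar> < r \<longrightarrow> real_analytic_at P t \<and> pinned_pos l (P t)) \<and>
     P 0 = p \<and> (\<exists>t. \<bar>t\<bar> < r \<and> P t \<noteq> p) \<and>
     active j P \<and> vanishing k (\<lambda>t. energy Eg Ee (P t)))"

primrec Ck :: "nat \<Rightarrow> 'a::euclidean_space set \<Rightarrow> ('a \<Rightarrow> 'b::real_normed_vector) \<Rightarrow> bool" where
  "Ck 0 U f = continuous_on U f"
| "Ck (Suc m) U f = ((\<forall>x\<in>U. f differentiable (at x)) \<and>
     (\<forall>v. Ck m U (\<lambda>x. frechet_derivative f (at x) v)))"

definition indicative :: "('a::euclidean_space \<Rightarrow> real) \<Rightarrow> 'a set \<Rightarrow> nat \<Rightarrow> real
    \<Rightarrow> 'b::euclidean_space set \<Rightarrow> (real \<Rightarrow> 'b \<Rightarrow> 'a) \<Rightarrow> bool" where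
  "indicative f V k \<epsilon> S Z \<longleftrightarrow> \<epsilon> > 0 \<and>
     (\<forall>z0\<in>S. (\<forall>t\<in>{0..\<epsilon>}. real_analytic_at (\<lambda>s. Z s z0) t \<and> Z t z0 \<in> V) \<and>
              (\<exists>t\<in>{0..\<epsilon>}. Z t z0 \<noteq> Z 0 z0) \<and> Z 0 z0 = 0) \<and>
     compact S \<and>
     (\<exists>U. open U \<and> {0..\<epsilon>} \<times> S \<subseteq> U \<and> Ck (2*k+1) U (\<lambda>(t,z0). Z t z0)) \<and>
     (\<forall>\<delta>. 0 < \<delta> \<and> \<delta> \<le> \<epsilon> \<longrightarrow>
        (\<exists>r>0. \<forall>x\<in>V. norm x < r \<longrightarrow> (\<exists>z0\<in>S. \<exists>t\<in>{0..\<delta>}. Z t z0 = x))) \<and>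
     (\<forall>z0\<in>S. \<forall>m<2*k. hvd m (\<lambda>t. f (Z t z0)) {0..\<epsilon>} 0 = 0)"

end

(* Along a trajectory t a + t^2 b with a in K, the energy difference f is a sum of bar terms
   E_ij(|w + t u + t^2 v|) - E_ij(|w|), where w = p_i - p_j and u, v are the corresponding
   differences of a and b.  Since a is in K we have w . u = 0, so the bar length is critical at
   t = 0; since E_ij has a local minimum at |w|, E_ij' vanishes there.  By Faa di Bruno's formula
   each derivative of order 1, 2, 3 of a composition g o h with h'(0) = 0 is g'(h 0) times a
   derivative of h, so every bar term, and hence f, vanishes to order four.

   The sum map K x Kbar -> K + Kbar is a linear
   isomorphism, which makes the parameter set compact and bounds |a| + |b| by C |a + b|.  A small
   x = a + b is reached at the t in (0, delta] with |t a + b| = t^2, which exists by the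
   intermediate value theorem.  Finally (t, a, b) |-> t a + t^2 b is polynomial, hence C^k for
   every k. *)

theory Submission
  imports Defs "HOL-Computational_Algebra.Polynomial"
begin

section \<open>Towers of derivatives\<close>

definition deriv_tower :: "nat \<Rightarrow> (nat \<Rightarrow> real \<Rightarrow> real) \<Rightarrow> real set \<Rightarrow> bool" where
  "deriv_tower k D S \<longleftrightarrow> (\<forall>m<k. \<forall>t\<in>S. (D m has_real_derivative D (Suc m) t) (at t))"

lemma deriv_tower_subset: "deriv_tower k D S \<Longrightarrow> T \<subseteq> S \<Longrightarrow> deriv_tower k D T"
  unfolding deriv_tower_def by blast

lemma deriv_tower_sum:
  assumes "\<And>e. e \<in> A \<Longrightarrow> deriv_tower k (D e) S"
  shows "deriv_tower k (\<lambda>m t. \<Sum>e\<in>A. D e m t) S"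
  using assms unfolding deriv_tower_def by (auto intro: DERIV_sum)

lemma deriv_tower_diff_const:
  assumes "deriv_tower k D S"
  shows "deriv_tower k (\<lambda>m t. D m t - (if m = 0 then c else 0)) S"
  using assms unfolding deriv_tower_def by (auto intro!: derivative_eq_intros)

lemma deriv_tower_poly: "deriv_tower k (\<lambda>m. poly ((pderiv ^^ m) p)) S"
  unfolding deriv_tower_def by simp

lemma deriv_tower_powr:
  "deriv_tower k (\<lambda>m y. (\<Prod>i<m. a - real i) * y powr (a - real m)) {0<..}"
  unfolding deriv_tower_def
proof (intro allI impI ballI)
  fix m :: nat and y :: real assume "y \<in> {0<..}"
  then have "((\<lambda>y. y powr (a - real m)) has_real_derivative (a - real m) * y powr (a - real m - 1)) (at y)"
    by (intro has_real_derivative_powr) auto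
  then have "((\<lambda>y. (\<Prod>i<m. a - real i) * y powr (a - real m)) has_real_derivative
      (\<Prod>i<m. a - real i) * ((a - real m) * y powr (a - real m - 1))) (at y)"
    by (rule DERIV_cmult)
  moreover have "a - real m - 1 = a - real (Suc m)"
    by simp
  ultimately show "((\<lambda>y. (\<Prod>i<m. a - real i) * y powr (a - real m)) has_real_derivative
      (\<Prod>i<Suc m. a - real i) * y powr (a - real (Suc m))) (at y)"
    by (simp only: prod.lessThan_Suc mult.assoc)
qed

lemma hvd_deriv_tower:
  assumes "a < b" and tower: "deriv_tower k D {a..b}"
  shows "m \<le> k \<Longrightarrow> t \<in> {a..b} \<Longrightarrow> hvd m (D 0) {a..b} t = D m t"
proof (induction m arbitrary: t)
  case 0
  then show ?case by simp
next
  case (Suc m)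
  have "(D m has_real_derivative D (Suc m) t) (at t within {a..b})"
    using tower Suc.prems unfolding deriv_tower_def by (auto intro: has_field_derivative_at_within)
  then have "(hvd m (D 0) {a..b} has_vector_derivative D (Suc m) t) (at t within {a..b})"
    unfolding has_real_derivative_iff_has_vector_derivative has_vector_derivative_def
    by (rule has_derivative_transform_within[where d=1]) (use Suc in auto)
  then show ?case
    using vector_derivative_within_closed_interval[OF \<open>a < b\<close>] Suc.prems by simp
qed

lemma real_analytic_at_deriv_tower:
  assumes "real_analytic_at f x0"
  shows "\<exists>r>0. \<exists>D. D 0 = f \<and> (\<forall>k. deriv_tower k D (ball x0 r))"
proof -
  obtain r a where "r > 0" and f_sums: "\<And>x. \<bar>x - x0\<bar> < r \<Longrightarrow> (\<lambda>n. (x - x0) ^ n *\<^sub>R a n) sums f x"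
    using assms unfolding real_analytic_at_def by blast
  define Q where "Q m x = (\<Sum>n. (diffs ^^ m) a n * (x - x0) ^ n)" for m x
  have summable: "summable (\<lambda>n. (diffs ^^ m) a n * y ^ n)" if "\<bar>y\<bar> < r" for m y
    using that
  proof (induction m arbitrary: y)
    case 0
    then show ?case
      using f_sums[of "y + x0"] by (simp add: sums_iff mult.commute)
  next
    case (Suc m)
    then show ?case
      using termdiff_converges[of y r "(diffs ^^ m) a"] by simp
  qed
  have Q_deriv: "(Q m has_real_derivative Q (Suc m) x) (at x)" if "x \<in> ball x0 r" for m x
  proof -
    have "((\<lambda>y. \<Sum>n. (diffs ^^ m) a n * y ^ n) has_real_derivative
        (\<Sum>n. diffs ((diffs ^^ m) a) n * (x - x0) ^ n)) (at (x - x0))"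
      by (rule termdiffs_strong'[where K=r]) (use that summable in \<open>auto simp: dist_real_def\<close>)
    from DERIV_chain2[OF this DERIV_diff[OF DERIV_ident DERIV_const]]
    show ?thesis
      unfolding Q_def by simp
  qed
  have f_eq_Q: "f x = Q 0 x" if "x \<in> ball x0 r" for x
    using f_sums[of x] that unfolding Q_def by (simp add: sums_iff mult.commute dist_real_def abs_minus_commute)
  define D where "D m = (if m = 0 then f else Q m)" for m
  have "(f has_real_derivative Q 1 x) (at x)" if "x \<in> ball x0 r" for x
    using has_field_derivative_transform_within_open[OF Q_deriv[OF that] open_ball that] f_eq_Q by simp
  then have "deriv_tower k D (ball x0 r)" for k
    unfolding deriv_tower_def D_def using Q_deriv by auto
  moreover have "D 0 = f"
    by (simp add: D_def)
  ultimately show ?thesis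
    using \<open>r > 0\<close> by blast
qed

lemma strict_local_min_deriv_tower:
  assumes "real_analytic_at f x0"
    and "\<exists>r>0. \<forall>x. 0 < \<bar>x - x0\<bar> \<and> \<bar>x - x0\<bar> < r \<longrightarrow> f x0 < f x"
  shows "\<exists>r>0. \<exists>D. D 0 = f \<and> (\<forall>k. deriv_tower k D (ball x0 r)) \<and> D 1 x0 = 0"
proof -
  obtain r D where "r > 0" "D 0 = f" and tower: "\<And>k. deriv_tower k D (ball x0 r)"
    using real_analytic_at_deriv_tower[OF assms(1)] by blast
  obtain r' where "r' > 0" and min: "\<And>x. 0 < \<bar>x - x0\<bar> \<Longrightarrow> \<bar>x - x0\<bar> < r' \<Longrightarrow> f x0 < f x"
    using assms(2) by blast
  have "(f has_real_derivative D 1 x0) (at x0)"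
    using tower[of 1] \<open>r > 0\<close> \<open>D 0 = f\<close> unfolding deriv_tower_def by auto
  moreover have "\<forall>y. \<bar>x0 - y\<bar> < r' \<longrightarrow> f x0 \<le> f y"
    using min by (metis abs_minus_commute less_eq_real_def zero_less_abs_iff right_minus_eq)
  ultimately have "D 1 x0 = 0"
    using DERIV_local_min \<open>r' > 0\<close> by blast
  then show ?thesis
    using \<open>r > 0\<close> \<open>D 0 = f\<close> tower by blast
qed

(* Faa di Bruno's formula up to order three *)
definition comp_tower :: "(nat \<Rightarrow> real \<Rightarrow> real) \<Rightarrow> (nat \<Rightarrow> real \<Rightarrow> real) \<Rightarrow> nat \<Rightarrow> real \<Rightarrow> real" where
  "comp_tower G H m t =
    (if m = 0 then G 0 (H 0 t)
     else if m = 1 then G 1 (H 0 t) * H 1 t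
     else if m = 2 then G 2 (H 0 t) * (H 1 t)\<^sup>2 + G 1 (H 0 t) * H 2 t
     else G 3 (H 0 t) * (H 1 t) ^ 3 + 3 * G 2 (H 0 t) * H 1 t * H 2 t + G 1 (H 0 t) * H 3 t)"

lemma deriv_tower_comp:
  assumes G: "deriv_tower 3 G J" and H: "deriv_tower 3 H I" and HJ: "\<And>t. t \<in> I \<Longrightarrow> H 0 t \<in> J"
  shows "deriv_tower 3 (comp_tower G H) I"
  unfolding deriv_tower_def
proof (intro allI impI ballI)
  fix m :: nat and t assume "m < 3" "t \<in> I"
  have "(G m has_real_derivative G (Suc m) (H 0 t)) (at (H 0 t))"
    and "(H m has_real_derivative H (Suc m) t) (at t)" if "m < 3" for m
    using G H HJ[OF \<open>t \<in> I\<close>] \<open>t \<in> I\<close> that unfolding deriv_tower_def by auto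
  note G' = this(1) and H' = this(2)
  have GH: "((\<lambda>t. G m (H 0 t)) has_real_derivative G (Suc m) (H 0 t) * H 1 t) (at t)" if "m < 3" for m
    using DERIV_chain2[OF G'[OF that] H'[of 0]] by simp
  have H1sq: "((\<lambda>t. (H 1 t)\<^sup>2) has_real_derivative 2 * H 1 t * H 2 t) (at t)"
    using DERIV_mult[OF H'[of 1] H'[of 1]] by (simp add: power2_eq_square mult.assoc numeral_2_eq_2)
  have "m = 0 \<or> m = 1 \<or> m = 2"
    using \<open>m < 3\<close> by auto
  then show "(comp_tower G H m has_real_derivative comp_tower G H (Suc m) t) (at t)"
  proof (elim disjE)
    assume "m = 0"
    then show ?thesis
      unfolding comp_tower_def using GH[of 0] by simp
  next
    assume "m = 1"
    then show ?thesis
      unfolding comp_tower_def using DERIV_mult[OF GH[of 1] H'[of 1]]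
      by (simp add: power2_eq_square algebra_simps numeral_2_eq_2)
  next
    assume "m = 2"
    then show ?thesis
      unfolding comp_tower_def using DERIV_add[OF DERIV_mult[OF GH[of 2] H1sq] DERIV_mult[OF GH[of 1] H'[of 2]]]
      by (simp add: power2_eq_square power3_eq_cube algebra_simps numeral_2_eq_2 numeral_3_eq_3)
  qed
qed

lemma comp_tower_critical:
  assumes "H 1 t = 0" "0 < m" "m \<le> 3"
  shows "comp_tower G H m t = G 1 (H 0 t) * H m t"
proof -
  have "m = 1 \<or> m = 2 \<or> m = 3"
    using assms(2,3) by auto
  then show ?thesis
    using assms(1) unfolding comp_tower_def by auto
qed

lemma deriv_tower_comp_critical:
  assumes G: "deriv_tower 3 G J" and H: "deriv_tower 3 H I" and HJ: "\<And>t. t \<in> I \<Longrightarrow> H 0 t \<in> J"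
    and H1: "H 1 t0 = 0" and G1: "G 1 (H 0 t0) = 0"
  shows "\<exists>D. D 0 = (\<lambda>t. G 0 (H 0 t) - G 0 (H 0 t0)) \<and> deriv_tower 3 D I \<and> (\<forall>m\<le>3. D m t0 = 0)"
proof -
  define D where "D m t = comp_tower G H m t - (if m = 0 then G 0 (H 0 t0) else 0)" for m t
  have "deriv_tower 3 D I"
    unfolding D_def by (intro deriv_tower_diff_const deriv_tower_comp[OF G H HJ])
  moreover have "D m t0 = 0" if "m \<le> 3" for m
  proof (cases "m = 0")
    case True
    then show ?thesis
      by (simp add: D_def comp_tower_def)
  next
    case False
    then have "D m t0 = G 1 (H 0 t0) * H m t0"
      using comp_tower_critical[where H=H, OF H1] that by (simp add: D_def)
    then show ?thesis
      using G1 by simp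
  qed
  moreover have "D 0 = (\<lambda>t. G 0 (H 0 t) - G 0 (H 0 t0))"
    by (simp add: D_def comp_tower_def fun_eq_iff)
  ultimately show ?thesis
    by blast
qed

lemma deriv_tower_norm_quadratic_curve:
  fixes w u v :: "'v::real_inner"
  assumes wu: "w \<bullet> u = 0" and nonzero: "\<And>t. t \<in> I \<Longrightarrow> w + t *\<^sub>R u + t\<^sup>2 *\<^sub>R v \<noteq> 0"
  shows "\<exists>N. N 0 = (\<lambda>t. norm (w + t *\<^sub>R u + t\<^sup>2 *\<^sub>R v)) \<and> deriv_tower 3 N I \<and> N 1 0 = 0"
proof -
  \<comment> \<open>the squared length \<open>|w + t u + t\<^sup>2 v|\<^sup>2\<close> as a polynomial in \<open>t\<close>\<close>
  define q where "q = [:w \<bullet> w, 2 * (w \<bullet> u), u \<bullet> u + 2 * (w \<bullet> v), 2 * (u \<bullet> v), v \<bullet> v:]"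
  define S where "S m = poly ((pderiv ^^ m) q)" for m
  define Sqrt where "Sqrt m y = (\<Prod>i<m. 1/2 - real i) * y powr (1/2 - real m)" for m y
  have S0: "S 0 t = (w + t *\<^sub>R u + t\<^sup>2 *\<^sub>R v) \<bullet> (w + t *\<^sub>R u + t\<^sup>2 *\<^sub>R v)" for t
    by (simp add: S_def q_def inner_add_left inner_add_right inner_commute algebra_simps
        power2_eq_square power3_eq_cube power4_eq_xxxx)
  have "deriv_tower 3 Sqrt {0<..}"
    unfolding Sqrt_def[abs_def] by (rule deriv_tower_powr)
  moreover have "deriv_tower 3 S I"
    unfolding S_def[abs_def] by (rule deriv_tower_poly)
  moreover have "S 0 t \<in> {0<..}" if "t \<in> I" for t
    using nonzero[OF that] unfolding S0 by simp
  ultimately have "deriv_tower 3 (comp_tower Sqrt S) I"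
    by (rule deriv_tower_comp)
  moreover have "comp_tower Sqrt S 0 = (\<lambda>t. norm (w + t *\<^sub>R u + t\<^sup>2 *\<^sub>R v))"
    by (simp add: comp_tower_def Sqrt_def S0 norm_eq_sqrt_inner powr_half_sqrt fun_eq_iff)
  moreover have "S 1 0 = 0"
    by (simp add: S_def q_def wu pderiv_pCons)
  then have "comp_tower Sqrt S 1 0 = 0"
    by (simp add: comp_tower_def)
  ultimately show ?thesis
    by blast
qed

lemma bar_energy_deriv_tower:
  fixes w u v :: "'v::real_inner"
  assumes wu: "w \<bullet> u = 0"
    and G: "deriv_tower 3 G (ball (norm w) R)" and G1: "G 1 (norm w) = 0" and R: "R \<le> norm w"
    and small: "\<And>t. t \<in> I \<Longrightarrow> norm (t *\<^sub>R u + t\<^sup>2 *\<^sub>R v) < R"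
  shows "\<exists>D. D 0 = (\<lambda>t. G 0 (norm (w + t *\<^sub>R u + t\<^sup>2 *\<^sub>R v)) - G 0 (norm w)) \<and>
             deriv_tower 3 D I \<and> (\<forall>m\<le>3. D m 0 = 0)"
proof -
  have near: "\<bar>norm (w + t *\<^sub>R u + t\<^sup>2 *\<^sub>R v) - norm w\<bar> < R" if "t \<in> I" for t
    using norm_triangle_ineq3[of "w + t *\<^sub>R u + t\<^sup>2 *\<^sub>R v" w] small[OF that]
    by (simp add: add.assoc)
  then have "w + t *\<^sub>R u + t\<^sup>2 *\<^sub>R v \<noteq> 0" if "t \<in> I" for t
    using R that by force
  then obtain N where N0: "N 0 = (\<lambda>t. norm (w + t *\<^sub>R u + t\<^sup>2 *\<^sub>R v))"
    and "deriv_tower 3 N I" "N 1 0 = 0"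
    using deriv_tower_norm_quadratic_curve[OF wu] by blast
  then show ?thesis
    using deriv_tower_comp_critical[OF G, of N I 0] near G1
    by (simp add: N0 dist_real_def abs_minus_commute)
qed

section \<open>Polynomial curves\<close>

definition polynomial_curve :: "(real \<Rightarrow> 'v::real_vector) \<Rightarrow> bool" where
  "polynomial_curve g \<longleftrightarrow> (\<exists>N c. g = (\<lambda>t. \<Sum>k<N. t ^ k *\<^sub>R c k))"

lemma polynomial_curve_zero: "polynomial_curve (\<lambda>t. 0)"
  unfolding polynomial_curve_def by (rule exI[of _ 0]) simp

lemma polynomial_curve_monomial: "polynomial_curve (\<lambda>t. t ^ n *\<^sub>R c)"
  unfolding polynomial_curve_def
  by (intro exI[of _ "Suc n"] exI[of _ "\<lambda>k. if k = n then c else 0"]) (simp add: fun_eq_iff)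

lemma polynomial_curve_add:
  assumes "polynomial_curve f" "polynomial_curve g"
  shows "polynomial_curve (\<lambda>t. f t + g t)"
proof -
  obtain N1 c1 where f: "f = (\<lambda>t. \<Sum>k<N1. t ^ k *\<^sub>R c1 k)"
    using assms(1) polynomial_curve_def by blast
  obtain N2 c2 where g: "g = (\<lambda>t. \<Sum>k<N2. t ^ k *\<^sub>R c2 k)"
    using assms(2) polynomial_curve_def by blast
  define N where "N = max N1 N2"
  have pad: "(\<Sum>k<M. t ^ k *\<^sub>R c k) = (\<Sum>k<N. t ^ k *\<^sub>R (if k < M then c k else 0))"
    if "M \<le> N" for M and c :: "nat \<Rightarrow> 'a" and t
    using that by (intro sum.mono_neutral_cong_left) auto
  have "f t = (\<Sum>k<N. t ^ k *\<^sub>R (if k < N1 then c1 k else 0))"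
    and "g t = (\<Sum>k<N. t ^ k *\<^sub>R (if k < N2 then c2 k else 0))" for t
    using pad[where M=N1 and c=c1 and t=t] pad[where M=N2 and c=c2 and t=t] by (simp_all add: f g N_def)
  then have "(\<lambda>t. f t + g t) =
      (\<lambda>t. \<Sum>k<N. t ^ k *\<^sub>R ((if k < N1 then c1 k else 0) + (if k < N2 then c2 k else 0)))"
    by (simp add: sum.distrib scaleR_add_right)
  then show ?thesis
    unfolding polynomial_curve_def by (intro exI[of _ N] exI)
qed

lemma polynomial_curve_scaleR:
  assumes "polynomial_curve f"
  shows "polynomial_curve (\<lambda>t. s *\<^sub>R f t)"
proof -
  obtain N c where "f = (\<lambda>t. \<Sum>k<N. t ^ k *\<^sub>R c k)"
    using assms polynomial_curve_def by blast
  then have "(\<lambda>t. s *\<^sub>R f t) = (\<lambda>t. \<Sum>k<N. t ^ k *\<^sub>R (s *\<^sub>R c k))"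
    by (simp add: scaleR_sum_right mult.commute)
  then show ?thesis
    unfolding polynomial_curve_def by (intro exI[of _ N] exI[of _ "\<lambda>k. s *\<^sub>R c k"])
qed

lemma polynomial_curve_scaleR_vector:
  fixes f :: "real \<Rightarrow> real"
  assumes "polynomial_curve f"
  shows "polynomial_curve (\<lambda>t. f t *\<^sub>R u)"
proof -
  obtain N c where "f = (\<lambda>t. \<Sum>k<N. t ^ k *\<^sub>R c k)"
    using assms polynomial_curve_def by blast
  then have "(\<lambda>t. f t *\<^sub>R u) = (\<lambda>t. \<Sum>k<N. t ^ k *\<^sub>R (c k *\<^sub>R u))"
    by (simp add: scaleR_sum_left)
  then show ?thesis
    unfolding polynomial_curve_def by (intro exI[of _ N] exI[of _ "\<lambda>k. c k *\<^sub>R u"])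
qed

lemma polynomial_curve_has_vector_derivative:
  assumes "polynomial_curve g"
  shows "\<exists>g'. polynomial_curve g' \<and> (\<forall>t. (g has_vector_derivative g' t) (at t))"
proof -
  obtain N c where g: "g = (\<lambda>t. \<Sum>k<N. t ^ k *\<^sub>R c k)"
    using assms polynomial_curve_def by blast
  define g' where "g' t = (\<Sum>k<N. (of_nat k * t ^ (k - 1)) *\<^sub>R c k)" for t
  have "(g has_vector_derivative g' t) (at t)" for t
    unfolding g g'_def
    by (rule has_vector_derivative_sum)
       (auto intro!: derivative_eq_intros has_vector_derivative_scaleR[where g="\<lambda>_. c _" and g'=0, simplified])
  moreover have "polynomial_curve g'"
  proof (cases N)
    case 0
    then show ?thesis
      using polynomial_curve_zero by (simp add: g'_def[abs_def])
  next
    case (Suc M)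
    have "g' = (\<lambda>t. \<Sum>k<M. t ^ k *\<^sub>R (of_nat (Suc k) *\<^sub>R c (Suc k)))"
      unfolding g'_def[abs_def] Suc sum.lessThan_Suc_shift by (simp add: mult.commute)
    then show ?thesis
      unfolding polynomial_curve_def by (intro exI[of _ M] exI[of _ "\<lambda>k. of_nat (Suc k) *\<^sub>R c (Suc k)"])
  qed
  ultimately show ?thesis
    by blast
qed

lemma Ck_polynomial_combination:
  fixes A B :: "real \<Rightarrow> real" and C :: "real \<Rightarrow> 'v::euclidean_space"
  assumes "polynomial_curve A" "polynomial_curve B" "polynomial_curve C"
  shows "Ck m UNIV (\<lambda>(t, a, b). A t *\<^sub>R a + B t *\<^sub>R b + C t)"
  using assms
proof (induction m arbitrary: A B C)
  case (0 A B C)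
  obtain A' B' C' where "\<And>t. (A has_vector_derivative A' t) (at t)"
    "\<And>t. (B has_vector_derivative B' t) (at t)" "\<And>t. (C has_vector_derivative C' t) (at t)"
    using polynomial_curve_has_vector_derivative 0 by metis
  then have "continuous (at x) (\<lambda>x::real \<times> 'v \<times> 'v. A (fst x) *\<^sub>R fst (snd x) + B (fst x) *\<^sub>R snd (snd x) + C (fst x))" for x
    by (intro continuous_intros isCont_o2[OF continuous_fst[OF continuous_ident]]
        differentiable_imp_continuous_within differentiableI_vector)
  then show ?case
    by (simp add: continuous_on_eq_continuous_at split_def)
next
  case (Suc m A B C)
  obtain A' B' C' where A': "polynomial_curve A'" "\<And>t. (A has_vector_derivative A' t) (at t)"
    and B': "polynomial_curve B'" "\<And>t. (B has_vector_derivative B' t) (at t)"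
    and C': "polynomial_curve C'" "\<And>t. (C has_vector_derivative C' t) (at t)"
    using polynomial_curve_has_vector_derivative Suc.prems by metis
  let ?f = "\<lambda>x::real \<times> 'v \<times> 'v. A (fst x) *\<^sub>R fst (snd x) + B (fst x) *\<^sub>R snd (snd x) + C (fst x)"
  have comp_fst: "((\<lambda>x. F (fst x)) has_derivative (\<lambda>h. fst h *\<^sub>R F' (fst x))) (at x)"
    if "\<And>t. (F has_vector_derivative F' t) (at t)" for F :: "real \<Rightarrow> 'w::real_normed_vector" and F' x
    using has_derivative_compose[OF has_derivative_fst[OF has_derivative_ident[of "at x"]]
        that[unfolded has_vector_derivative_def]]
    by simp
  have D: "(?f has_derivative (\<lambda>h. (A (fst x) *\<^sub>R fst (snd h) + (fst h *\<^sub>R A' (fst x)) *\<^sub>R fst (snd x))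
      + (B (fst x) *\<^sub>R snd (snd h) + (fst h *\<^sub>R B' (fst x)) *\<^sub>R snd (snd x)) + fst h *\<^sub>R C' (fst x))) (at x)" for x
    by (intro has_derivative_add has_derivative_scaleR comp_fst A'(2) B'(2) C'(2)
        has_derivative_fst has_derivative_snd has_derivative_ident)
  have "frechet_derivative ?f (at x) v = (fst v * A' (fst x)) *\<^sub>R fst (snd x) + (fst v * B' (fst x)) *\<^sub>R snd (snd x)
           + (A (fst x) *\<^sub>R fst (snd v) + B (fst x) *\<^sub>R snd (snd v) + fst v *\<^sub>R C' (fst x))" for x v
    unfolding frechet_derivative_at[OF D[of x], symmetric] by (simp add: algebra_simps)
  then have "(\<lambda>x. frechet_derivative ?f (at x) v) =
      (\<lambda>(t, a, b). (fst v * A' t) *\<^sub>R a + (fst v * B' t) *\<^sub>R b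
           + (A t *\<^sub>R fst (snd v) + B t *\<^sub>R snd (snd v) + fst v *\<^sub>R C' t))" for v
    by (auto simp: fun_eq_iff)
  moreover have "Ck m UNIV (\<lambda>(t, a, b). (fst v * A' t) *\<^sub>R a + (fst v * B' t) *\<^sub>R b
           + (A t *\<^sub>R fst (snd v) + B t *\<^sub>R snd (snd v) + fst v *\<^sub>R C' t))" for v
    using polynomial_curve_scaleR[OF A'(1), of "fst v"] polynomial_curve_scaleR[OF B'(1), of "fst v"]
    by (intro Suc.IH polynomial_curve_scaleR polynomial_curve_add polynomial_curve_scaleR_vector Suc.prems C') simp_all
  moreover have "?f differentiable at x" for x
    using D[of x] unfolding differentiable_def by blast
  moreover have "(\<lambda>(t, a, b). A t *\<^sub>R a + B t *\<^sub>R b + C t) = ?f"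
    by (simp add: split_def)
  ultimately show ?case
    by simp
qed

section \<open>The quadratic family of trajectories\<close>

lemma subspace_sum_norm_bound:
  fixes K L :: "'v::euclidean_space set"
  assumes "subspace K" "subspace L" "K \<inter> L = {0}"
  shows "\<exists>C>0. \<forall>a\<in>K. \<forall>b\<in>L. norm a + norm b \<le> C * norm (a + b)"
proof -
  have "subspace (K \<times> L)"
    using assms by (simp add: subspace_Times)
  moreover have "closed (K \<times> L)"
    using assms by (simp add: closed_Times closed_subspace)
  moreover have "bounded_linear (\<lambda>x::'v \<times> 'v. fst x + snd x)"
    by (intro bounded_linear_add bounded_linear_fst bounded_linear_snd)
  moreover have "x = 0" if "x \<in> K \<times> L" "fst x + snd x = 0" for x
  proof -
    have "fst x = - snd x"
      using that(2) by (simp add: eq_neg_iff_add_eq_0)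
    then have "fst x \<in> K \<inter> L"
      using that(1) assms(2) by (auto simp: subspace_neg)
    then show ?thesis
      using assms(3) \<open>fst x = - snd x\<close> by (simp add: prod_eq_iff)
  qed
  ultimately obtain e where "e > 0" and e: "\<And>x. x \<in> K \<times> L \<Longrightarrow> e * norm x \<le> norm (fst x + snd x)"
    using injective_imp_isometric[of "K \<times> L" "\<lambda>x. fst x + snd x"] by blast
  have "norm a + norm b \<le> 2 / e * norm (a + b)" if "a \<in> K" "b \<in> L" for a b
  proof -
    have "norm a + norm b \<le> 2 * norm (a, b)"
      using norm_fst_le[of a b] norm_snd_le[of b a] by linarith
    also have "\<dots> \<le> 2 / e * norm (a + b)"
      using e[of "(a, b)"] that \<open>e > 0\<close> by (simp add: field_simps)
    finally show ?thesis .
  qed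
  then show ?thesis
    using \<open>e > 0\<close> by (intro exI[of _ "2 / e"]) auto
qed

lemma compact_unit_sum_set:
  fixes K L :: "'v::euclidean_space set"
  assumes "subspace K" "subspace L" "K \<inter> L = {0}"
  shows "compact {(a, b). a \<in> K \<and> b \<in> L \<and> norm (a + b) = 1}"
proof -
  obtain C where C: "\<And>a b. a \<in> K \<Longrightarrow> b \<in> L \<Longrightarrow> norm a + norm b \<le> C * norm (a + b)"
    using subspace_sum_norm_bound[OF assms] by blast
  have "{(a, b). a \<in> K \<and> b \<in> L \<and> norm (a + b) = 1} = (K \<times> L) \<inter> {x. norm (fst x + snd x) = 1}"
    by auto
  moreover have "closed ((K \<times> L) \<inter> {x. norm (fst x + snd x) = 1})"
    using assms by (intro closed_Int closed_Times closed_subspace closed_Collect_eq continuous_intros)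
  moreover have "norm (a, b) \<le> C" if "a \<in> K" "b \<in> L" "norm (a + b) = 1" for a b
    using norm_Pair_le[of a b] C[OF that(1,2)] that(3) by simp
  then have "bounded {(a, b). a \<in> K \<and> b \<in> L \<and> norm (a + b) = 1}"
    unfolding bounded_iff by auto
  ultimately show ?thesis
    by (simp add: compact_eq_bounded_closed)
qed

lemma quadratic_curve_through:
  fixes x y :: "'v::real_normed_vector"
  assumes "x + y \<noteq> 0" "0 < \<delta>" "\<delta> * norm x + norm y \<le> \<delta>\<^sup>2"
  shows "\<exists>t\<in>{0<..\<delta>}. norm (x /\<^sub>R t + y /\<^sub>R t\<^sup>2) = 1"
proof -
  define h where "h t = norm (t *\<^sub>R x + y) - t\<^sup>2" for t
  have "h \<delta> \<le> 0"
    using norm_triangle_ineq[of "\<delta> *\<^sub>R x" y] assms(2,3) by (simp add: h_def)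
  obtain t0 where t0: "0 \<le> t0" "t0 \<le> \<delta>" "0 < h t0" "y = 0 \<Longrightarrow> 0 < t0"
  proof (cases "y = 0")
    case False
    then show ?thesis
      using that[of 0] assms(2) by (simp add: h_def)
  next
    case True
    define t0 where "t0 = min (norm x) \<delta> / 2"
    have "0 < t0" "t0 < norm x" "t0 \<le> \<delta>"
      using True assms(1,2) by (auto simp: t0_def min_def)
    moreover have "0 < h t0"
      using \<open>0 < t0\<close> \<open>t0 < norm x\<close> True by (simp add: h_def power2_eq_square)
    ultimately show ?thesis
      by (intro that) auto
  qed
  have "continuous_on {t0..\<delta>} h"
    unfolding h_def by (intro continuous_intros)
  then obtain t where t: "t0 \<le> t" "t \<le> \<delta>" "h t = 0"
    using IVT2'[of h \<delta> 0 t0] \<open>h \<delta> \<le> 0\<close> t0 by auto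
  have "0 < t"
  proof (cases "y = 0")
    case False
    then have "h 0 \<noteq> 0"
      by (simp add: h_def)
    then show ?thesis
      using t t0 by (cases "t = 0") auto
  qed (use t t0 in auto)
  have "x /\<^sub>R t + y /\<^sub>R t\<^sup>2 = (1 / t\<^sup>2) *\<^sub>R (t *\<^sub>R x + y)"
    using \<open>0 < t\<close> by (simp add: scaleR_add_right power2_eq_square divide_inverse_commute inverse_mult_distrib)
  then have "norm (x /\<^sub>R t + y /\<^sub>R t\<^sup>2) = 1"
    using t \<open>0 < t\<close> by (simp add: h_def)
  then show ?thesis
    using \<open>0 < t\<close> \<open>t \<le> \<delta>\<close> by auto
qed

lemma quadratic_family_covers:
  fixes K L :: "'v::euclidean_space set"
  assumes "subspace K" "subspace L" "K \<inter> L = {0}" "V \<subseteq> {a + b | a b. a \<in> K \<and> b \<in> L}"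
    and nonempty: "{(a, b). a \<in> K \<and> b \<in> L \<and> norm (a + b) = 1} \<noteq> {}" and "0 < \<delta>"
  shows "\<exists>r>0. \<forall>x\<in>V. norm x < r \<longrightarrow>
           (\<exists>z\<in>{(a, b). a \<in> K \<and> b \<in> L \<and> norm (a + b) = 1}.
              \<exists>t\<in>{0..\<delta>}. (case z of (a, b) \<Rightarrow> t *\<^sub>R a + t\<^sup>2 *\<^sub>R b) = x)"
proof -
  obtain C where "C > 0" and C: "\<And>a b. a \<in> K \<Longrightarrow> b \<in> L \<Longrightarrow> norm a + norm b \<le> C * norm (a + b)"
    using subspace_sum_norm_bound[OF assms(1-3)] by blast
  define r where "r = \<delta>\<^sup>2 / ((\<delta> + 1) * C)"
  have "\<exists>z\<in>{(a, b). a \<in> K \<and> b \<in> L \<and> norm (a + b) = 1}.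
          \<exists>t\<in>{0..\<delta>}. (case z of (a, b) \<Rightarrow> t *\<^sub>R a + t\<^sup>2 *\<^sub>R b) = x"
    if x: "x \<in> V" and small: "norm x < r" for x
  proof (cases "x = 0")
    case True
    then show ?thesis
      using nonempty \<open>0 < \<delta>\<close> by force
  next
    case False
    obtain a b where ab: "x = a + b" "a \<in> K" "b \<in> L"
      using x assms(4) by blast
    have "\<delta> * norm a + norm b \<le> (\<delta> + 1) * (norm a + norm b)"
      using \<open>0 < \<delta>\<close> by (simp add: algebra_simps)
    also have "\<dots> \<le> (\<delta> + 1) * (C * norm x)"
      using C[OF ab(2,3)] ab(1) \<open>0 < \<delta>\<close> by (intro mult_left_mono) auto
    also have "\<dots> = ((\<delta> + 1) * C) * norm x"
      by (simp only: mult.assoc)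
    also have "\<dots> \<le> ((\<delta> + 1) * C) * r"
      using small \<open>0 < \<delta>\<close> \<open>C > 0\<close> by (intro mult_left_mono) auto
    also have "\<dots> = \<delta>\<^sup>2"
      using \<open>0 < \<delta>\<close> \<open>C > 0\<close> by (simp add: r_def)
    finally obtain t where t: "t \<in> {0<..\<delta>}" and unit: "norm (a /\<^sub>R t + b /\<^sub>R t\<^sup>2) = 1"
      using quadratic_curve_through[of a b \<delta>] False ab(1) \<open>0 < \<delta>\<close> by blast
    have "a /\<^sub>R t \<in> K" "b /\<^sub>R t\<^sup>2 \<in> L"
      using ab assms(1,2) by (auto intro: subspace_scale)
    moreover have "t *\<^sub>R (a /\<^sub>R t) + t\<^sup>2 *\<^sub>R (b /\<^sub>R t\<^sup>2) = x"
      using t ab(1) by simp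
    ultimately show ?thesis
      using t unit by (intro bexI[of _ "(a /\<^sub>R t, b /\<^sub>R t\<^sup>2)"]) (auto intro!: bexI[of _ t])
  qed
  moreover have "r > 0"
    using \<open>0 < \<delta>\<close> \<open>C > 0\<close> by (simp add: r_def)
  ultimately show ?thesis
    by blast
qed

lemma real_analytic_at_quadratic_curve:
  fixes a b :: "'v::real_normed_vector"
  shows "real_analytic_at (\<lambda>s. s *\<^sub>R a + s\<^sup>2 *\<^sub>R b) t"
  unfolding real_analytic_at_def
proof (intro exI[of _ 1] conjI allI impI exI)
  fix x :: real
  define c where "c m = (if m = 0 then t *\<^sub>R a + t\<^sup>2 *\<^sub>R b else if m = 1 then a + (2 * t) *\<^sub>R b
                         else if m = 2 then b else 0)" for m :: nat
  have "(\<lambda>m. (x - t) ^ m *\<^sub>R c m) sums (\<Sum>m\<in>{0, 1, 2}. (x - t) ^ m *\<^sub>R c m)"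
    by (rule sums_finite) (auto simp: c_def)
  moreover have "(\<Sum>m\<in>{0, 1, 2}. (x - t) ^ m *\<^sub>R c m) = x *\<^sub>R a + x\<^sup>2 *\<^sub>R b"
    by (simp add: c_def power2_eq_square algebra_simps flip: scaleR_add_left)
  ultimately show "(\<lambda>m. (x - t) ^ m *\<^sub>R c m) sums (x *\<^sub>R a + x\<^sup>2 *\<^sub>R b)"
    by simp
qed simp

lemma norm_quadratic_curve_le:
  fixes a b :: "'v::real_normed_vector"
  assumes "0 \<le> t" "t \<le> 1"
  shows "norm (t *\<^sub>R a + t\<^sup>2 *\<^sub>R b) \<le> t * (norm a + norm b)"
proof -
  have "t\<^sup>2 \<le> t"
    using assms by (simp add: power2_eq_square mult_left_le_one_le)
  then have "t\<^sup>2 * norm b \<le> t * norm b"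
    by (rule mult_right_mono) simp
  then show ?thesis
    using norm_triangle_ineq[of "t *\<^sub>R a" "t\<^sup>2 *\<^sub>R b"] assms(1) by (simp add: algebra_simps)
qed

lemma quadratic_curves_uniformly_small:
  fixes S :: "('v::real_normed_vector \<times> 'v) set"
  assumes "bounded S" "0 < R"
  shows "\<exists>\<epsilon>>0. \<forall>(a, b)\<in>S. \<forall>t\<in>{0..\<epsilon>}. norm (t *\<^sub>R a + t\<^sup>2 *\<^sub>R b) < R"
proof -
  obtain B where "B > 0" and B: "\<And>z. z \<in> S \<Longrightarrow> norm z \<le> B"
    using assms(1) bounded_pos by blast
  define \<epsilon> where "\<epsilon> = min 1 (R / (4 * B))"
  have "norm (t *\<^sub>R a + t\<^sup>2 *\<^sub>R b) < R" if "(a, b) \<in> S" "t \<in> {0..\<epsilon>}" for a b t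
  proof -
    have "norm (t *\<^sub>R a + t\<^sup>2 *\<^sub>R b) \<le> t * (norm a + norm b)"
      using that(2) by (intro norm_quadratic_curve_le) (auto simp: \<epsilon>_def)
    also have "\<dots> \<le> \<epsilon> * (2 * B)"
      using B[OF that(1)] norm_fst_le[of a b] norm_snd_le[of b a] that(2) by (intro mult_mono) auto
    also have "\<dots> \<le> R / 2"
      using \<open>B > 0\<close> by (simp add: \<epsilon>_def min_def field_simps)
    finally show ?thesis
      using \<open>0 < R\<close> by simp
  qed
  moreover have "\<epsilon> > 0"
    using \<open>B > 0\<close> \<open>0 < R\<close> by (simp add: \<epsilon>_def)
  ultimately show ?thesis
    by blast
qed

lemma indicative_quadratic_family:
  fixes f :: "'v::euclidean_space \<Rightarrow> real"
  assumes V: "subspace V" and K: "subspace K" "K \<subseteq> V" and compl: "complement_in V K L"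
    and nontrivial: "\<exists>q\<in>V. q \<noteq> 0" and "0 < \<epsilon>"
    and vanish: "\<And>a b m. a \<in> K \<Longrightarrow> b \<in> L \<Longrightarrow> norm (a + b) = 1 \<Longrightarrow> m < 2 * k \<Longrightarrow>
                   hvd m (\<lambda>t. f (t *\<^sub>R a + t\<^sup>2 *\<^sub>R b)) {0..\<epsilon>} 0 = 0"
  shows "indicative f V k \<epsilon> {(a, b). a \<in> K \<and> b \<in> L \<and> norm (a + b) = 1} (\<lambda>t (a, b). t *\<^sub>R a + t\<^sup>2 *\<^sub>R b)"
proof -
  let ?S = "{(a, b). a \<in> K \<and> b \<in> L \<and> norm (a + b) = 1}"
  have L: "subspace L" "L \<subseteq> V" "K \<inter> L = {0}" and V_sum: "V \<subseteq> {a + b | a b. a \<in> K \<and> b \<in> L}"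
    using compl unfolding complement_in_def by auto
  have "?S \<noteq> {}"
  proof -
    obtain a b where "a \<in> K" "b \<in> L" "a + b \<noteq> 0"
      using nontrivial V_sum by blast
    then have "(a /\<^sub>R norm (a + b), b /\<^sub>R norm (a + b)) \<in> ?S"
      using K(1) L(1) by (auto intro: subspace_scale simp flip: scaleR_add_right)
    then show ?thesis
      by blast
  qed
  have curve: "(\<forall>t\<in>{0..\<epsilon>}. real_analytic_at (\<lambda>s. s *\<^sub>R a + s\<^sup>2 *\<^sub>R b) t \<and> t *\<^sub>R a + t\<^sup>2 *\<^sub>R b \<in> V) \<and>
      \<epsilon> *\<^sub>R a + \<epsilon>\<^sup>2 *\<^sub>R b \<noteq> 0" if "(a, b) \<in> ?S" for a b
  proof (intro conjI ballI notI)
    fix t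
    show "real_analytic_at (\<lambda>s. s *\<^sub>R a + s\<^sup>2 *\<^sub>R b) t"
      by (rule real_analytic_at_quadratic_curve)
    show "t *\<^sub>R a + t\<^sup>2 *\<^sub>R b \<in> V"
      using that K L V by (auto intro!: subspace_add subspace_scale)
  next
    assume "\<epsilon> *\<^sub>R a + \<epsilon>\<^sup>2 *\<^sub>R b = 0"
    then have "a = - (\<epsilon> *\<^sub>R b)"
      using \<open>0 < \<epsilon>\<close> by (simp add: power2_eq_square eq_neg_iff_add_eq_0 flip: scaleR_add_right scaleR_scaleR)
    then have "a \<in> K \<inter> L"
      using that L(1) by (auto intro: subspace_neg subspace_scale)
    then show False
      using that L(3) \<open>a = - (\<epsilon> *\<^sub>R b)\<close> \<open>0 < \<epsilon>\<close> by auto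
  qed
  let ?Z = "\<lambda>t (a, b). t *\<^sub>R a + t\<^sup>2 *\<^sub>R b"
  show ?thesis
    unfolding indicative_def
  proof (intro conjI)
    show "\<forall>z\<in>?S. (\<forall>t\<in>{0..\<epsilon>}. real_analytic_at (\<lambda>s. ?Z s z) t \<and> ?Z t z \<in> V) \<and>
        (\<exists>t\<in>{0..\<epsilon>}. ?Z t z \<noteq> ?Z 0 z) \<and> ?Z 0 z = 0"
      using curve \<open>0 < \<epsilon>\<close> by fastforce
    show "compact ?S"
      using compact_unit_sum_set[OF K(1) L(1) L(3)] .
    have "Ck (2 * k + 1) UNIV (\<lambda>(t, a, b). t *\<^sub>R a + t\<^sup>2 *\<^sub>R b)"
      using Ck_polynomial_combination[OF polynomial_curve_monomial[of 1 1] polynomial_curve_monomial[of 2 1]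
          polynomial_curve_zero] by (simp del: Ck.simps)
    then show "\<exists>U. open U \<and> {0..\<epsilon>} \<times> ?S \<subseteq> U \<and> Ck (2 * k + 1) U (\<lambda>(t, z). ?Z t z)"
      by (intro exI[of _ UNIV]) simp
    show "\<forall>\<delta>. 0 < \<delta> \<and> \<delta> \<le> \<epsilon> \<longrightarrow> (\<exists>r>0. \<forall>x\<in>V. norm x < r \<longrightarrow> (\<exists>z\<in>?S. \<exists>t\<in>{0..\<delta>}. ?Z t z = x))"
      using quadratic_family_covers[OF K(1) L(1) L(3) V_sum \<open>?S \<noteq> {}\<close>] by blast
    show "\<forall>z\<in>?S. \<forall>m<2 * k. hvd m (\<lambda>t. f (?Z t z)) {0..\<epsilon>} 0 = 0"
      using vanish by fastforce
  qed (rule \<open>0 < \<epsilon>\<close>)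
qed

section \<open>Bar frameworks\<close>

definition edge_vec :: "'a::ab_group_add^'n \<Rightarrow> 'n \<times> 'n \<Rightarrow> 'a" where
  "edge_vec q e = q $ fst e - q $ snd e"

lemma edge_vec_add: "edge_vec (x + y) e = edge_vec x e + edge_vec y e"
  by (simp add: edge_vec_def)

lemma edge_vec_scaleR: "edge_vec (c *\<^sub>R x) e = c *\<^sub>R edge_vec x e"
  by (simp add: edge_vec_def scaleR_diff_right)

lemma norm_edge_vec_le: "norm (edge_vec x e) \<le> 2 * norm x"
  using norm_triangle_ineq4[of "x $ fst e" "x $ snd e"] Finite_Cartesian_Product.norm_nth_le[of x "fst e"]
    Finite_Cartesian_Product.norm_nth_le[of x "snd e"]
  unfolding edge_vec_def by linarith

lemma energy_eq_sum_edge_vec: "energy Eg Ee q = (\<Sum>e\<in>Eg. Ee e (norm (edge_vec q e)))"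
  unfolding energy_def edge_vec_def by (simp add: case_prod_beta')

lemma Kspace_orthogonal: "a \<in> Kspace l Eg p \<Longrightarrow> e \<in> Eg \<Longrightarrow> edge_vec p e \<bullet> edge_vec a e = 0"
  unfolding Kspace_def edge_vec_def by auto

lemma subspace_pinned_space: "subspace (pinned_space l)"
  unfolding subspace_def pinned_space_def pinned_pos_def by auto

lemma Kspace_eq_edge_vec:
  "Kspace l Eg p = {q \<in> pinned_space l. \<forall>e\<in>Eg. edge_vec p e \<bullet> edge_vec q e = 0}"
  unfolding Kspace_def edge_vec_def by (simp add: case_prod_beta')

lemma subspace_Kspace: "subspace (Kspace l Eg p)"
  using subspace_pinned_space[of l] unfolding subspace_def Kspace_eq_edge_vec
  by (auto simp: edge_vec_add edge_vec_scaleR inner_add_right edge_vec_def[of 0])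

lemma E_flex_pinned_space_nontrivial:
  fixes p :: "real^'d::{finite,linorder}^'n::{finite,linorder}"
  assumes "E_flex j k l Eg Ee p" "pinned_pos l p"
  shows "\<exists>q\<in>pinned_space l. q \<noteq> (0 :: real^'d::{finite,linorder}^'n::{finite,linorder})"
proof -
  obtain P t
    where "P t \<noteq> p" "pinned_pos l (P t)"
    using assms(1) unfolding E_flex_def by blast
  then have "P t - p \<in> pinned_space l"
    using assms(2) subspace_diff[OF subspace_pinned_space] by (simp add: pinned_space_def)
  moreover have "P t - p \<noteq> 0"
    using \<open>P t \<noteq> p\<close> by simp
  ultimately show ?thesis
    by blast
qed

lemma stiff_bar_deriv_towers:
  assumes "stiff_bar Eg Ee p"
  shows "\<exists>R>0. \<exists>G. \<forall>e\<in>Eg. G e 0 = Ee e \<and> G e 1 (norm (edge_vec p e)) = 0 \<and>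
           deriv_tower 3 (G e) (ball (norm (edge_vec p e)) R) \<and> R \<le> norm (edge_vec p e)"
proof -
  have "\<exists>r>0. \<exists>D. D 0 = Ee e \<and> D 1 (norm (edge_vec p e)) = 0 \<and>
          deriv_tower 3 D (ball (norm (edge_vec p e)) r) \<and> r \<le> norm (edge_vec p e)" if "e \<in> Eg" for e
  proof -
    let ?d = "norm (edge_vec p e)"
    have "?d \<noteq> 0" "real_analytic_at (Ee e) ?d"
      "\<exists>r>0. \<forall>x. 0 < \<bar>x - ?d\<bar> \<and> \<bar>x - ?d\<bar> < r \<longrightarrow> Ee e ?d < Ee e x"
      using assms that unfolding stiff_bar_def edge_vec_def by (auto simp: case_prod_beta')
    then obtain r D where "r > 0" "D 0 = Ee e" "D 1 ?d = 0" and tower: "deriv_tower 3 D (ball ?d r)"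
      using strict_local_min_deriv_tower by blast
    moreover have "deriv_tower 3 D (ball ?d (min r ?d))"
      by (rule deriv_tower_subset[OF tower]) auto
    ultimately show ?thesis
      using \<open>?d \<noteq> 0\<close> by (intro exI[of _ "min r ?d"]) auto
  qed
  then obtain r G where edge: "\<And>e. e \<in> Eg \<Longrightarrow> r e > 0 \<and> G e 0 = Ee e \<and> G e 1 (norm (edge_vec p e)) = 0 \<and>
          deriv_tower 3 (G e) (ball (norm (edge_vec p e)) (r e)) \<and> r e \<le> norm (edge_vec p e)"
    by metis
  define R where "R = Min (insert 1 (r ` Eg))"
  have "R > 0"
    using edge by (simp add: R_def)
  moreover have "R \<le> r e" if "e \<in> Eg" for e
    using that by (simp add: R_def)
  ultimately show ?thesis
    using edge by (intro exI[of _ R] exI[of _ G] conjI ballI; force intro: deriv_tower_subset)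
qed

lemma hvd_energy_quadratic_curve_eq_0:
  fixes p a b :: "real^'d::{finite,linorder}^'n::{finite,linorder}"
  assumes towers: "\<And>e. e \<in> Eg \<Longrightarrow> G e 0 = Ee e \<and> G e 1 (norm (edge_vec p e)) = 0 \<and>
           deriv_tower 3 (G e) (ball (norm (edge_vec p e)) R) \<and> R \<le> norm (edge_vec p e)"
    and a: "a \<in> Kspace l Eg p" and "0 < \<epsilon>"
    and small: "\<And>t. t \<in> {0..\<epsilon>} \<Longrightarrow> norm (t *\<^sub>R a + t\<^sup>2 *\<^sub>R b) < R / 2"
    and "m \<le> 3"
  shows "hvd m (\<lambda>t. energy Eg Ee (p + (t *\<^sub>R a + t\<^sup>2 *\<^sub>R b)) - energy Eg Ee p) {0..\<epsilon>} 0 = 0"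
proof -
  have "\<forall>e\<in>Eg. \<exists>D. D 0 = (\<lambda>t. Ee e (norm (edge_vec (p + (t *\<^sub>R a + t\<^sup>2 *\<^sub>R b)) e)) - Ee e (norm (edge_vec p e))) \<and>
            deriv_tower 3 D {0..\<epsilon>} \<and> (\<forall>m\<le>3. D m 0 = 0)"
  proof
    fix e assume "e \<in> Eg"
    have "norm (t *\<^sub>R edge_vec a e + t\<^sup>2 *\<^sub>R edge_vec b e) < R" if "t \<in> {0..\<epsilon>}" for t
      using norm_edge_vec_le[of "t *\<^sub>R a + t\<^sup>2 *\<^sub>R b" e] small[OF that]
      by (simp add: edge_vec_add edge_vec_scaleR)
    then have "\<exists>D. D 0 = (\<lambda>t. G e 0 (norm (edge_vec p e + t *\<^sub>R edge_vec a e + t\<^sup>2 *\<^sub>R edge_vec b e))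
                          - G e 0 (norm (edge_vec p e))) \<and>
                 deriv_tower 3 D {0..\<epsilon>} \<and> (\<forall>m\<le>3. D m 0 = 0)"
      using towers[OF \<open>e \<in> Eg\<close>]
      by (intro bar_energy_deriv_tower[OF Kspace_orthogonal[OF a \<open>e \<in> Eg\<close>]]) auto
    then show "\<exists>D. D 0 = (\<lambda>t. Ee e (norm (edge_vec (p + (t *\<^sub>R a + t\<^sup>2 *\<^sub>R b)) e)) - Ee e (norm (edge_vec p e))) \<and>
            deriv_tower 3 D {0..\<epsilon>} \<and> (\<forall>m\<le>3. D m 0 = 0)"
      using towers[OF \<open>e \<in> Eg\<close>] by (simp add: edge_vec_add edge_vec_scaleR add.assoc)
  qed
  from bchoice[OF this] obtain D where D: "\<forall>e\<in>Eg.
        D e 0 = (\<lambda>t. Ee e (norm (edge_vec (p + (t *\<^sub>R a + t\<^sup>2 *\<^sub>R b)) e)) - Ee e (norm (edge_vec p e))) \<and>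
        deriv_tower 3 (D e) {0..\<epsilon>} \<and> (\<forall>m\<le>3. D e m 0 = 0)"
    by blast
  define \<Phi> where "\<Phi> m t = (\<Sum>e\<in>Eg. D e m t)" for m t
  have \<Phi>0: "\<Phi> 0 = (\<lambda>t. energy Eg Ee (p + (t *\<^sub>R a + t\<^sup>2 *\<^sub>R b)) - energy Eg Ee p)"
    unfolding \<Phi>_def energy_eq_sum_edge_vec fun_eq_iff by (simp add: D sum_subtractf)
  have "deriv_tower 3 \<Phi> {0..\<epsilon>}"
    unfolding \<Phi>_def[abs_def] using D by (intro deriv_tower_sum) auto
  then have "hvd m (\<Phi> 0) {0..\<epsilon>} 0 = \<Phi> m 0"
    using hvd_deriv_tower[OF \<open>0 < \<epsilon>\<close>] \<open>m \<le> 3\<close> \<open>0 < \<epsilon>\<close> by simp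
  also have "\<dots> = 0"
    using D \<open>m \<le> 3\<close> by (simp add: \<Phi>_def)
  finally show ?thesis
    unfolding \<Phi>0 .
qed

theorem lemma7p3:
  fixes p :: "real^'d::{finite,linorder}^'n::{finite,linorder}"
    and l :: nat
    and Eg :: "('n::{finite,linorder} \<times> 'n::{finite,linorder}) set"
    and Ee :: "'n::{finite,linorder} \<times> 'n::{finite,linorder} \<Rightarrow> real \<Rightarrow> real"
    and Kbar :: "(real^'d::{finite,linorder}^'n::{finite,linorder}) set"
  assumes "graph_edges Eg"
    and "pinned l p"
    and "stiff_bar Eg Ee p"
    and "complement_in (pinned_space l) (Kspace l Eg p) Kbar"
    and "E_flex 1 2 l Eg Ee p"
  shows "\<exists>\<epsilon>. indicative (\<lambda>\<delta>. energy Eg Ee (p + \<delta>) - energy Eg Ee p) (pinned_space l) 2 \<epsilon>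
            {(a, b). a \<in> Kspace l Eg p \<and> b \<in> Kbar \<and> norm (a + b) = 1}
            (\<lambda>t (a, b). t *\<^sub>R a + t\<^sup>2 *\<^sub>R b)"
proof -
  have K: "subspace (Kspace l Eg p)" "Kspace l Eg p \<subseteq> pinned_space l"
    by (rule subspace_Kspace) (auto simp: Kspace_def)
  have Kbar: "subspace Kbar" "Kspace l Eg p \<inter> Kbar = {0}"
    using assms(4) unfolding complement_in_def by auto
  obtain R G where "R > 0" and towers: "\<forall>e\<in>Eg. G e 0 = Ee e \<and> G e 1 (norm (edge_vec p e)) = 0 \<and>
      deriv_tower 3 (G e) (ball (norm (edge_vec p e)) R) \<and> R \<le> norm (edge_vec p e)"
    using stiff_bar_deriv_towers[OF assms(3)] by blast
  have "0 < R / 2"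
    using \<open>R > 0\<close> by simp
  obtain \<epsilon> where "0 < \<epsilon>" and small: "\<forall>(a, b)\<in>{(a, b). a \<in> Kspace l Eg p \<and> b \<in> Kbar \<and> norm (a + b) = 1}.
      \<forall>t\<in>{0..\<epsilon>}. norm (t *\<^sub>R a + t\<^sup>2 *\<^sub>R b) < R / 2"
    using quadratic_curves_uniformly_small[OF compact_imp_bounded[OF compact_unit_sum_set[OF K(1) Kbar]] \<open>0 < R / 2\<close>]
    by blast
  have vanish: "hvd m (\<lambda>t. energy Eg Ee (p + (t *\<^sub>R a + t\<^sup>2 *\<^sub>R b)) - energy Eg Ee p) {0..\<epsilon>} 0 = 0"
    if "a \<in> Kspace l Eg p" "b \<in> Kbar" "norm (a + b) = 1" "m < 2 * 2" for a b m
    using towers small that \<open>0 < \<epsilon>\<close>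
    by (intro hvd_energy_quadratic_curve_eq_0[where G=G and R=R]) auto
  have "pinned_pos l p"
    using assms(2) unfolding pinned_def by blast
  then show ?thesis
    using indicative_quadratic_family[OF subspace_pinned_space K assms(4)
        E_flex_pinned_space_nontrivial[OF assms(5)] \<open>0 < \<epsilon>\<close> vanish] by blast
qed

end
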